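(* Let $X$ be a finite set and let $(p_B)_{B\subseteq X}$ be nonnegative reals with $\sum_{B\subseteq X}p_B=1$. For $A\subseteq X$ let $\mathcal{S}_A=\{B\subseteq X : A\cap B\neq\emptyset \text{ and } A\cap (X\setminus B)\neq\emptyset\}$ and $s_A=\sum_{B\in\mathcal{S}_A}p_B$ (so $s_A=0$ whenever $|A|\le 1$). Then: \begin{enumerate} \item For all $A\subseteq X$, $\displaystyle s_A=\sum_{B\subseteq A}(-1)^{|B|}s_B$ (the sum including $B=\emptyset$ and $B=A$). \item If $A\subseteq X$ has odd cardinality, then $\displaystyle s_A=\sum_{\substack{B\subset A\\ |B|\text{ even}}}\frac{\mathbb{T}_{|A|-|B|}}{2^{|A|-|B|}}\,s_B$. \end{enumerate}
   Context: $p_B$ is interpreted as the probability that, at a given bi-allelic site, exactly the taxa in $B$ have state $1$ (and those in $X\setminus B$ have state $0$); $s_A$ is then the probability that the site is segregating (non-constant) over $A$. The tangent numbers $\mathbb{T}_k$ are defined by the power series $\tanh(x)=\sum_{k=0}^\infty \mathbb{T}_k\,\frac{x^k}{k!}$. *)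

theory Defs
  imports "HOL-Analysis.Analysis"
begin

text \<open>Tangent numbers: tanh x = sum_k T_k x^k / k!, i.e. T_k is the k-th derivative of tanh at 0.\<close>
definition tangent_number :: "nat \<Rightarrow> real" where
  "tangent_number k = (deriv ^^ k) (tanh :: real \<Rightarrow> real) 0"

definition seg_splits :: "'a set \<Rightarrow> 'a set \<Rightarrow> 'a set set" where
  "seg_splits X A = {B. B \<subseteq> X \<and> A \<inter> B \<noteq> {} \<and> A \<inter> (X - B) \<noteq> {}}"

definition seg_prob :: "'a set \<Rightarrow> ('a set \<Rightarrow> real) \<Rightarrow> 'a set \<Rightarrow> real" where
  "seg_prob X p A = (\<Sum>B\<in>seg_splits X A. p B)"

end

theory Submission
  imports Defs "HOL-Computational_Algebra.Polynomial"
begin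

text \<open>
  For a fixed split B, the indicator of "C is segregating" is
  1 - [C \<subseteq> B] - [C \<subseteq> X - B] + [C = {}], and alternating summation over the
  subsets C of A turns [C \<subseteq> D] into [A \<inter> D = {}]. Hence each indicator, and so s,
  is a fixed point of the transform s \<mapsto> (A \<mapsto> \<Sum>C\<subseteq>A. (-1)^|C| s C).

  For odd |A| the fixed point equation reads
  2 s A = \<Sum>(even B \<subseteq> A) s B - \<Sum>(odd C \<subset> A) s C. Expanding the odd terms by induction,
  an even B collects the coefficient \<Sum>k<N. (N choose k) t k with N = |A| - |B| and
  t k = T k / 2^k, which equals 1 - 2 t N because tanh (x/2) (e^x + 1) = e^x - 1;
  the odd restriction on k is harmless since tanh is odd, so t vanishes at even k.
\<close>

lemma sum_Pow_neg_one_power_card: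
  assumes "finite A"
  shows "(\<Sum>C\<in>Pow A. (-1) ^ card C) = (if A = {} then 1 else 0 :: 'b :: ring_1)"
proof (cases "A = {}")
  case False
  then have "card {C. C \<subseteq> A \<and> even (card C)} = card {C. C \<subseteq> A \<and> odd (card C)}"
    using card_subsupersets_even_odd[of A "{}"] assms by auto
  with assms False show ?thesis
    by (simp add: sum_alternating_cancels)
qed simp

lemma sum_Pow_neg_one_power_card_subset:
  assumes "finite A"
  shows "(\<Sum>C\<in>Pow A. (-1) ^ card C * of_bool (C \<subseteq> D)) = (of_bool (A \<inter> D = {}) :: 'b :: ring_1)"
proof -
  have "(\<Sum>C\<in>Pow A. (-1) ^ card C * of_bool (C \<subseteq> D)) = (\<Sum>C\<in>Pow (A \<inter> D). (-1) ^ card C :: 'b)"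
    using assms by (intro sum.mono_neutral_cong_right) auto
  also have "\<dots> = of_bool (A \<inter> D = {})"
    using assms by (subst sum_Pow_neg_one_power_card) auto
  finally show ?thesis .
qed

lemma seg_prob_eq_sum_indicator:
  assumes "finite X"
  shows "seg_prob X p A = (\<Sum>B\<in>Pow X. p B * indicator (seg_splits X A) B)"
proof -
  have "seg_splits X A \<subseteq> Pow X"
    by (auto simp: seg_splits_def)
  then show ?thesis
    unfolding seg_prob_def using assms by (intro sum.mono_neutral_cong_left) auto
qed

lemma indicator_seg_splits:
  assumes "C \<subseteq> X" "B \<subseteq> X"
  shows "indicator (seg_splits X C) B
     = 1 - of_bool (C \<subseteq> X - B) - of_bool (C \<subseteq> B) + (of_bool (C \<subseteq> {}) :: real)"
  using assms by (auto simp: seg_splits_def indicator_def)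

lemma alternating_sum_indicator_seg_splits:
  assumes "finite A" "A \<subseteq> X" "B \<subseteq> X"
  shows "(\<Sum>C\<in>Pow A. (-1) ^ card C * indicator (seg_splits X C) B) = (indicator (seg_splits X A) B :: real)"
proof -
  have "(\<Sum>C\<in>Pow A. (-1) ^ card C * indicator (seg_splits X C) B)
      = (\<Sum>C\<in>Pow A. (-1) ^ card C - (-1) ^ card C * of_bool (C \<subseteq> X - B)
           - (-1) ^ card C * of_bool (C \<subseteq> B) + (-1) ^ card C * (of_bool (C \<subseteq> {}) :: real))"
    using assms(2,3) by (intro sum.cong refl) (auto simp: indicator_seg_splits algebra_simps)
  also have "\<dots> = (\<Sum>C\<in>Pow A. (-1) ^ card C) - (\<Sum>C\<in>Pow A. (-1) ^ card C * of_bool (C \<subseteq> X - B))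
        - (\<Sum>C\<in>Pow A. (-1) ^ card C * of_bool (C \<subseteq> B)) + (\<Sum>C\<in>Pow A. (-1) ^ card C * (of_bool (C \<subseteq> {}) :: real))"
    by (simp only: sum.distrib sum_subtractf)
  also have "\<dots> = indicator (seg_splits X A) B"
    using assms
    by (simp only: sum_Pow_neg_one_power_card sum_Pow_neg_one_power_card_subset)
       (auto simp: seg_splits_def indicator_def)
  finally show ?thesis .
qed

lemma seg_prob_alternating_sum:
  assumes "finite X" "A \<subseteq> X"
  shows "seg_prob X p A = (\<Sum>C\<in>Pow A. (-1) ^ card C * seg_prob X p C)"
proof -
  have fin: "finite A" using assms finite_subset by blast
  have "(\<Sum>C\<in>Pow A. (-1) ^ card C * seg_prob X p C)
      = (\<Sum>B\<in>Pow X. p B * (\<Sum>C\<in>Pow A. (-1) ^ card C * indicator (seg_splits X C) B))"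
    unfolding seg_prob_eq_sum_indicator[OF assms(1)] sum_distrib_left
    by (subst sum.swap) (simp add: mult_ac)
  also have "\<dots> = seg_prob X p A"
    unfolding seg_prob_eq_sum_indicator[OF assms(1)]
    by (rule sum.cong[OF refl]) (simp add: alternating_sum_indicator_seg_splits[OF fin assms(2)])
  finally show ?thesis ..
qed

lemma sum_Pow_card_binomial:
  fixes g :: "nat \<Rightarrow> 'b :: comm_semiring_1"
  assumes "finite S"
  shows "(\<Sum>D\<in>Pow S. g (card D)) = (\<Sum>k\<le>card S. of_nat (card S choose k) * g k)"
proof -
  have "(\<Sum>D\<in>Pow S. g (card D)) = (\<Sum>k\<le>card S. \<Sum>D | D \<in> Pow S \<and> card D = k. g (card D))"
    by (rule sum.group[symmetric]) (auto simp: assms card_mono)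
  also have "\<dots> = (\<Sum>k\<le>card S. of_nat (card S choose k) * g k)"
    using assms by (simp add: n_subsets)
  finally show ?thesis .
qed

lemma sum_supersets_card_diff:
  fixes g :: "nat \<Rightarrow> 'b :: comm_semiring_1"
  assumes "finite A" "B \<subseteq> A"
  shows "(\<Sum>C | B \<subseteq> C \<and> C \<subseteq> A. g (card C - card B))
       = (\<Sum>k\<le>card A - card B. of_nat (card A - card B choose k) * g k)"
proof -
  have "(\<Sum>C | B \<subseteq> C \<and> C \<subseteq> A. g (card C - card B)) = (\<Sum>D\<in>Pow (A - B). g (card (B \<union> D) - card B))"
    using assms(2) by (intro sum.reindex_bij_witness[of _ "\<lambda>D. B \<union> D" "\<lambda>C. C - B"])
      (auto simp: sup.absorb2)
  also have "\<dots> = (\<Sum>D\<in>Pow (A - B). g (card D))"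
  proof (intro sum.cong refl)
    fix D assume "D \<in> Pow (A - B)"
    then have "D \<subseteq> A" "B \<inter> D = {}"
      by auto
    then have "card (B \<union> D) = card B + card D"
      using card_Un_disjoint finite_subset assms by metis
    then show "g (card (B \<union> D) - card B) = g (card D)"
      by simp
  qed
  also have "\<dots> = (\<Sum>k\<le>card A - card B. of_nat (card A - card B choose k) * g k)"
    using assms finite_subset[OF assms(2,1)] by (simp add: sum_Pow_card_binomial card_Diff_subset)
  finally show ?thesis .
qed

lemma sum_odd_supersets:
  fixes t :: "nat \<Rightarrow> real"
  assumes t_even: "\<And>k. even k \<Longrightarrow> t k = 0"
    and t_rec: "\<And>N. N \<ge> 1 \<Longrightarrow> 2 * t N + (\<Sum>k<N. real (N choose k) * t k) = 1"
    and "finite A" "B \<subseteq> A" "even (card B)" "odd (card A)"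
  shows "(\<Sum>C | C \<subset> A \<and> odd (card C) \<and> B \<subseteq> C. t (card C - card B)) = 1 - 2 * t (card A - card B)"
proof -
  define N where "N = card A - card B"
  have "card B < card A"
    using card_mono[OF assms(3,4)] assms(5,6) by (auto simp: order.order_iff_strict)
  then have "N \<ge> 1"
    unfolding N_def by simp
  define g where "g k = (if k < N then t k else 0)" for k
  have "(\<Sum>C | C \<subset> A \<and> odd (card C) \<and> B \<subseteq> C. t (card C - card B))
      = (\<Sum>C | B \<subseteq> C \<and> C \<subseteq> A. g (card C - card B))"
  proof (rule sum.mono_neutral_cong_left)
    show "finite {C. B \<subseteq> C \<and> C \<subseteq> A}"
      by (rule finite_subset[of _ "Pow A"]) (use assms(3) in auto)
  next
    show "\<forall>C \<in> {C. B \<subseteq> C \<and> C \<subseteq> A} - {C. C \<subset> A \<and> odd (card C) \<and> B \<subseteq> C}.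
        g (card C - card B) = 0"
    proof
      fix C assume "C \<in> {C. B \<subseteq> C \<and> C \<subseteq> A} - {C. C \<subset> A \<and> odd (card C) \<and> B \<subseteq> C}"
      then have "C = A \<or> even (card C)"
        unfolding Diff_iff mem_Collect_eq psubset_eq by blast
      then show "g (card C - card B) = 0"
      proof
        assume "even (card C)"
        then have "even (card C - card B)"
          using assms(5) by simp
        then show ?thesis
          by (simp add: g_def t_even)
      qed (simp add: g_def N_def)
    qed
  next
    fix C assume "C \<in> {C. C \<subset> A \<and> odd (card C) \<and> B \<subseteq> C}"
    then have "C \<subset> A" "B \<subseteq> C"
      by simp_all
    then have "card C < card A" "card B \<le> card C"
      using assms(3) finite_subset[OF _ assms(3)] by (simp_all add: psubset_card_mono card_mono)
    then show "t (card C - card B) = g (card C - card B)"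
      unfolding g_def N_def by simp
  qed auto
  also have "\<dots> = (\<Sum>k\<le>N. real (N choose k) * g k)"
    unfolding N_def using assms(3,4) by (rule sum_supersets_card_diff)
  also have "\<dots> = (\<Sum>k<N. real (N choose k) * t k)"
    by (simp add: g_def flip: lessThan_Suc_atMost)
  also have "\<dots> = 1 - 2 * t N"
    using t_rec[OF \<open>N \<ge> 1\<close>] by simp
  finally show ?thesis
    unfolding N_def .
qed

lemma odd_expansion_of_alternating_fixpoint:
  fixes s :: "'a set \<Rightarrow> real" and t :: "nat \<Rightarrow> real"
  assumes "finite X"
    and s_alt: "\<And>A. A \<subseteq> X \<Longrightarrow> s A = (\<Sum>B\<in>Pow A. (-1) ^ card B * s B)"
    and t_even: "\<And>k. even k \<Longrightarrow> t k = 0"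
    and t_rec: "\<And>N. N \<ge> 1 \<Longrightarrow> 2 * t N + (\<Sum>k<N. real (N choose k) * t k) = 1"
  shows "A \<subseteq> X \<Longrightarrow> odd (card A) \<Longrightarrow>
     s A = (\<Sum>B | B \<subset> A \<and> even (card B). t (card A - card B) * s B)"
proof (induction "card A" arbitrary: A rule: less_induct)
  case less
  let ?Ev = "{B. B \<subset> A \<and> even (card B)}" and ?Od = "{C. C \<subset> A \<and> odd (card C)}"
  have "finite A"
    using less.prems(1) \<open>finite X\<close> by (rule finite_subset)
  then have fin: "finite ?Ev" "finite ?Od"
    by (auto intro: rev_finite_subset[of "Pow A"])
  have Pow_split: "Pow A = insert A (?Ev \<union> ?Od)"
    by auto
  have Ev_Od: "finite (?Ev \<union> ?Od)" "A \<notin> ?Ev \<union> ?Od" "?Ev \<inter> ?Od = {}"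
    using fin by auto
  have "s A = (\<Sum>B\<in>Pow A. (-1) ^ card B * s B)"
    using less.prems(1) by (rule s_alt)
  also have "\<dots> = (\<Sum>B\<in>?Ev. (-1) ^ card B * s B) + (\<Sum>C\<in>?Od. (-1) ^ card C * s C) - s A"
    unfolding Pow_split sum.insert[OF Ev_Od(1,2)] sum.union_disjoint[OF fin Ev_Od(3)]
    using less.prems(2) by simp
  also have "\<dots> = (\<Sum>B\<in>?Ev. s B) - (\<Sum>C\<in>?Od. s C) - s A"
    by (simp add: sum_negf)
  finally have two_s: "2 * s A = (\<Sum>B\<in>?Ev. s B) - (\<Sum>C\<in>?Od. s C)"
    by simp
  have "(\<Sum>C\<in>?Od. s C) = (\<Sum>C\<in>?Od. \<Sum>B | B \<in> ?Ev \<and> B \<subseteq> C. t (card C - card B) * s B)"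
  proof (intro sum.cong refl)
    fix C assume C: "C \<in> ?Od"
    then have "card C < card A" "C \<subseteq> X"
      using \<open>finite A\<close> less.prems(1) by (auto intro: psubset_card_mono)
    moreover have "{B. B \<in> ?Ev \<and> B \<subseteq> C} = {B. B \<subset> C \<and> even (card B)}"
      using C by auto
    ultimately show "s C = (\<Sum>B | B \<in> ?Ev \<and> B \<subseteq> C. t (card C - card B) * s B)"
      using C by (auto intro: less.hyps)
  qed
  also have "\<dots> = (\<Sum>B\<in>?Ev. \<Sum>C | C \<in> ?Od \<and> B \<subseteq> C. t (card C - card B) * s B)"
    by (rule sum.swap_restrict[OF fin(2,1)])
  also have "\<dots> = (\<Sum>B\<in>?Ev. s B * (1 - 2 * t (card A - card B)))"
  proof (intro sum.cong refl)
    fix B assume "B \<in> ?Ev"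
    then have "B \<subseteq> A" "even (card B)"
      by auto
    have "(\<Sum>C | C \<in> ?Od \<and> B \<subseteq> C. t (card C - card B) * s B)
        = (\<Sum>C | C \<subset> A \<and> odd (card C) \<and> B \<subseteq> C. t (card C - card B)) * s B"
      by (simp only: sum_distrib_right mem_Collect_eq conj_assoc)
    also have "\<dots> = s B * (1 - 2 * t (card A - card B))"
      by (simp only: sum_odd_supersets[OF t_even t_rec \<open>finite A\<close> \<open>B \<subseteq> A\<close> \<open>even (card B)\<close> less.prems(2)]
          mult.commute)
    finally show "(\<Sum>C | C \<in> ?Od \<and> B \<subseteq> C. t (card C - card B) * s B) = s B * (1 - 2 * t (card A - card B))" .
  qed
  finally have "2 * s A = (\<Sum>B\<in>?Ev. s B - s B * (1 - 2 * t (card A - card B)))"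
    using two_s by (simp only: sum_subtractf)
  also have "\<dots> = 2 * (\<Sum>B\<in>?Ev. t (card A - card B) * s B)"
    unfolding sum_distrib_left by (intro sum.cong refl) (simp add: algebra_simps)
  finally show ?case
    unfolding mult_left_cancel[OF zero_neq_numeral[symmetric]] .
qed

definition smooth :: "('a :: real_normed_field \<Rightarrow> 'a) \<Rightarrow> bool" where
  "smooth f \<longleftrightarrow> (\<forall>n x. (deriv ^^ n) f field_differentiable (at x))"

lemma smooth_has_field_derivative:
  "smooth f \<Longrightarrow> ((deriv ^^ n) f has_field_derivative deriv ((deriv ^^ n) f) x) (at x)"
  unfolding smooth_def by (simp add: DERIV_deriv_iff_field_differentiable)

lemma higher_deriv_mult_smooth:
  assumes "smooth f" "smooth g"
  shows "(deriv ^^ n) (\<lambda>w. f w * g w) z =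
           (\<Sum>i\<le>n. of_nat (n choose i) * (deriv ^^ i) f z * (deriv ^^ (n - i)) g z)"
proof (induction n arbitrary: z)
  case 0 then show ?case by simp
next
  case (Suc n z)
  have der: "\<And>n. ((deriv ^^ n) f has_field_derivative deriv ((deriv ^^ n) f) z) (at z)"
            "\<And>n. ((deriv ^^ n) g has_field_derivative deriv ((deriv ^^ n) g) z) (at z)"
    using assms by (auto intro: smooth_has_field_derivative)
  have Suc_choose: "Suc n choose k = (n choose k) + (if k = 0 then 0 else n choose (k - 1))" for k
    by (cases k) simp_all
  have sumeq: "(\<Sum>i\<le>n. of_nat (n choose i) * (deriv ((deriv ^^ i) f) z * (deriv ^^ (n - i)) g z
                 + deriv ((deriv ^^ (n - i)) g) z * (deriv ^^ i) f z))
      = g z * deriv ((deriv ^^ n) f) z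
        + (\<Sum>i\<le>n. (deriv ^^ i) f z * (of_nat (Suc n choose i) * (deriv ^^ (Suc n - i)) g z))"
    apply (simp add: Suc_choose algebra_simps sum.distrib atLeast0AtMost[symmetric])
    apply (subst (4) sum_Suc_reindex)
    apply (auto simp: algebra_simps Suc_diff_le intro: sum.cong)
    done
  have "((deriv ^^ n) (\<lambda>w. f w * g w) has_field_derivative
         (\<Sum>i\<le>Suc n. of_nat (Suc n choose i) * (deriv ^^ i) f z * (deriv ^^ (Suc n - i)) g z)) (at z)"
    apply (rule has_field_derivative_transform_within_open
        [of "\<lambda>w. (\<Sum>i\<le>n. of_nat (n choose i) * (deriv ^^ i) f w * (deriv ^^ (n - i)) g w)" _ _ UNIV])
       apply (simp add: algebra_simps)
       apply (rule derivative_eq_intros | simp)+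
           apply (auto intro: DERIV_mult der Suc.IH [symmetric])
    by (metis (no_types, lifting) mult.commute sum.cong sumeq)
  then show ?case
    by (simp add: DERIV_imp_deriv)
qed

lemma higher_deriv_odd_function:
  fixes f :: "'a :: real_normed_field \<Rightarrow> 'a"
  assumes "smooth f" and odd: "\<And>x. f (- x) = - f x"
  shows "(deriv ^^ n) f (- x) = (-1) ^ Suc n * (deriv ^^ n) f x"
proof (induction n arbitrary: x)
  case 0
  show ?case by (simp add: odd)
next
  case (Suc n)
  define D where "D = (deriv ^^ n) f"
  define c :: 'a where "c = (-1) ^ Suc n"
  have D_eq: "D = (\<lambda>y. c * D (- y))"
    using Suc.IH by (auto simp: D_def c_def fun_eq_iff)
  have "((\<lambda>y. D (- y)) has_field_derivative - deriv D (- y)) (at y)" for y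
    using DERIV_chain2[OF smooth_has_field_derivative[OF assms(1), of n, folded D_def] DERIV_minus[OF DERIV_ident]]
    by simp
  then have "((\<lambda>y. c * D (- y)) has_field_derivative c * - deriv D (- y)) (at y)" for y
    by (rule DERIV_cmult)
  then have "deriv D y = c * - deriv D (- y)" for y
    by (subst D_eq) (rule DERIV_imp_deriv)
  from this[of "- x"] show ?case
    by (simp add: D_def c_def)
qed

lemma has_real_derivative_poly_tanh:
  "((\<lambda>x. poly P (tanh x)) has_real_derivative poly (pderiv P * [:1, 0, -1:]) (tanh x)) (at x)"
proof -
  have "cosh x \<noteq> 0"
    using cosh_real_pos[of x] by simp
  then have "((\<lambda>x. poly P (tanh x)) has_real_derivative poly (pderiv P) (tanh x) * ((1 - tanh x ^ 2) * 1)) (at x)"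
    by (intro DERIV_chain2[OF poly_DERIV] has_field_derivative_tanh DERIV_ident)
  then show ?thesis
    by (simp add: power2_eq_square algebra_simps)
qed

lemma higher_deriv_tanh_poly: "\<exists>P. (deriv ^^ n) tanh = (\<lambda>x :: real. poly P (tanh x))"
proof (induction n)
  case 0
  show ?case
    by (rule exI[of _ "[:0, 1:]"]) auto
next
  case (Suc n)
  then obtain P where "(deriv ^^ n) tanh = (\<lambda>x :: real. poly P (tanh x))"
    by blast
  then show ?case
    by (auto intro!: exI[of _ "pderiv P * [:1, 0, -1:]"] DERIV_imp_deriv has_real_derivative_poly_tanh)
qed

lemma smooth_tanh: "smooth (tanh :: real \<Rightarrow> real)"
  unfolding smooth_def
proof (intro allI)
  fix n and x :: real
  obtain P where "(deriv ^^ n) tanh = (\<lambda>x :: real. poly P (tanh x))"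
    using higher_deriv_tanh_poly by blast
  then show "(deriv ^^ n) tanh field_differentiable at x"
    unfolding field_differentiable_def using has_real_derivative_poly_tanh by auto
qed

lemma has_real_derivative_exp_double:
  "((\<lambda>x. a * exp (2 * x) + c) has_real_derivative 2 * a * exp (2 * x)) (at x)"
  by (auto intro!: derivative_eq_intros)

lemma higher_deriv_exp_double_plus:
  "(deriv ^^ n) (\<lambda>x :: real. exp (2 * x) + c) = (\<lambda>x. 2 ^ n * exp (2 * x) + (if n = 0 then c else 0))"
proof (induction n)
  case (Suc n)
  have "deriv (\<lambda>x :: real. 2 ^ n * exp (2 * x) + d) x = 2 ^ Suc n * exp (2 * x)" for d x
    using DERIV_imp_deriv[OF has_real_derivative_exp_double] by simp
  then show ?case
    by (simp add: Suc.IH fun_eq_iff)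
qed simp

lemma smooth_exp_double_plus: "smooth (\<lambda>x :: real. exp (2 * x) + c)"
  unfolding smooth_def higher_deriv_exp_double_plus field_differentiable_def
  by (blast intro: has_real_derivative_exp_double)

lemma tanh_mult_exp_double: "tanh x * (exp (2 * x) + 1) = exp (2 * x) - (1 :: real)"
proof -
  define e where "e = exp (2 * x)"
  have "e > 0" "exp (- 2 * x) = 1 / e"
    by (simp_all add: e_def exp_minus divide_inverse)
  moreover have "(1 - 1 / e) / (1 + 1 / e) = (e - 1) / (e + 1)"
    using \<open>e > 0\<close> by (simp add: divide_simps)
  ultimately show ?thesis
    unfolding tanh_real_altdef e_def[symmetric] using \<open>e > 0\<close> by simp
qed

lemma tangent_number_even: "even k \<Longrightarrow> tangent_number k = 0"
  using higher_deriv_odd_function[OF smooth_tanh, of k 0] unfolding tangent_number_def by simp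

lemma tangent_number_recurrence:
  assumes "N \<ge> 1"
  shows "2 * (tangent_number N / 2 ^ N) + (\<Sum>k<N. real (N choose k) * (tangent_number k / 2 ^ k)) = 1"
proof -
  let ?T = tangent_number
  have scaled: "(\<Sum>i\<le>N. real (N choose i) * ?T i * 2 ^ (N - i))
      = 2 ^ N * (\<Sum>i\<le>N. real (N choose i) * (?T i / 2 ^ i))"
    unfolding sum_distrib_left by (intro sum.cong refl) (simp add: power_diff)
  have "(2 :: real) ^ N = (deriv ^^ N) (\<lambda>x :: real. exp (2 * x) + (- 1)) 0"
    using assms by (subst higher_deriv_exp_double_plus) simp
  also have "\<dots> = (deriv ^^ N) (\<lambda>x. tanh x * (exp (2 * x) + 1)) 0"
    by (simp add: tanh_mult_exp_double)
  also have "\<dots> = (\<Sum>i\<le>N. real (N choose i) * ?T i * (2 ^ (N - i) + (if N - i = 0 then 1 else 0)))"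
    unfolding higher_deriv_mult_smooth[OF smooth_tanh smooth_exp_double_plus]
      higher_deriv_exp_double_plus tangent_number_def by simp
  also have "\<dots> = (\<Sum>i\<le>N. real (N choose i) * ?T i * 2 ^ (N - i) + (if i = N then ?T N else 0))"
    by (intro sum.cong refl) (auto simp: algebra_simps)
  also have "\<dots> = 2 ^ N * (\<Sum>i\<le>N. real (N choose i) * (?T i / 2 ^ i)) + ?T N"
    by (simp add: sum.distrib scaled)
  also have "\<dots> = 2 ^ N * ((\<Sum>k<N. real (N choose k) * (?T k / 2 ^ k)) + 2 * (?T N / 2 ^ N))"
    by (simp add: algebra_simps flip: lessThan_Suc_atMost)
  finally show ?thesis
    by simp
qed

theorem theorem1:
  fixes X :: "'a set" and p :: "'a set \<Rightarrow> real"
  assumes "finite X"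
    and "\<And>B. B \<subseteq> X \<Longrightarrow> p B \<ge> 0"
    and "(\<Sum>B\<in>Pow X. p B) = 1"
  shows "(\<forall>A. A \<subseteq> X \<longrightarrow>
            seg_prob X p A = (\<Sum>B\<in>Pow A. (-1) ^ card B * seg_prob X p B))
       \<and> (\<forall>A. A \<subseteq> X \<longrightarrow> odd (card A) \<longrightarrow>
            seg_prob X p A =
              (\<Sum>B\<in>{B. B \<subset> A \<and> even (card B)}.
                 tangent_number (card A - card B) / 2 ^ (card A - card B) * seg_prob X p B))"
proof (intro conjI allI impI)
  fix A assume "A \<subseteq> X"
  then show "seg_prob X p A = (\<Sum>B\<in>Pow A. (-1) ^ card B * seg_prob X p B)"
    by (rule seg_prob_alternating_sum[OF assms(1)])
next
  fix A assume "A \<subseteq> X" "odd (card A)"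
  have t_even: "tangent_number k / 2 ^ k = 0" if "even k" for k
    using that by (simp add: tangent_number_even)
  note expansion = odd_expansion_of_alternating_fixpoint[where t = "\<lambda>k. tangent_number k / 2 ^ k",
      OF assms(1) seg_prob_alternating_sum[OF assms(1)] t_even tangent_number_recurrence
      \<open>A \<subseteq> X\<close> \<open>odd (card A)\<close>]
  then show "seg_prob X p A = (\<Sum>B\<in>{B. B \<subset> A \<and> even (card B)}.
      tangent_number (card A - card B) / 2 ^ (card A - card B) * seg_prob X p B)"
    by simp
qed

end
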